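(* Let $\mathcal C$ be a concept hierarchy and $r_1\in[0,1]$. Let $\mathcal A_2$ be the network defined below. Then for every $B\subseteq C_0$ presented at time 0 and every concept $c\in C$ with $c\notin supp_{r_1}(B)$, the neuron $rep(c)$ does not fire at time $level(c)$ in $\mathcal A_2$ (that is, $\mathcal A_2$ guarantees $r_1$-non-firing for $\mathcal C$).
   Context: Concept hierarchies: fix positive integers $\ell_{max},n,k$. A universal set $D$ of concepts is partitioned into disjoint sets $D_0,\dots,D_{\ell_{max}}$ with $|D_0|=n$; $level(c)=\ell$ for $c\in D_\ell$. A concept hierarchy $\mathcal C$ consists of $C\subseteq D$, with $C_\ell=C\cap D_\ell$, and for each $c\in C_\ell$ with $1\le\ell\le\ell_{max}$ a set $children(c)\subseteq C_{\ell-1}$, such that $|C_{\ell_{max}}|=k$, $|children(c)|=k$ for all such $c$, and $children(c)\cap children(c')=\emptyset$ for distinct $c,c'\in C_\ell$. For $B\subseteq D_0$ and $r\in[0,1]$: $B(0)=B\cap C_0$; for $1\le\ell\le\ell_{max}$, $B(\ell)=\{c\in C_\ell:|children(c)\cap B(\ell-1)|\ge rk\}$; $supp_r(B)=\bigcup_{\ell}B(\ell)$. Network $\mathcal A_2$: neurons partitioned into layers $N_0,\dots,N_{\ell_{max}}$; no failures. Each $c\in D_0$ has a neuron $rep(c)\in N_0$ and each $c\in C$ with $level(c)\ge1$ a neuron $rep(c)\in N_{level(c)}$, all distinct. For $v\in N_\ell$, $\ell\ge1$, and $u\in N_{\ell-1}$, the edge weight $w(u,v)$ is $1$ if $v=rep(c)$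 and $u=rep(c')$ for some child $c'$ of $c$, and $0$ otherwise. Threshold $\tau=r_1k$. Input $B\subseteq C_0$ presented at time 0: layer-0 neurons in $\{rep(b):b\in B\}$ fire at time 0, other layer-0 neurons do not, and no layer-0 neuron fires at any other time. Every neuron $v$ in a layer $\ell\ge1$ does not fire at time 0 and fires at time $t\ge1$ iff $\sum_{u\in N_{\ell-1}}w(u,v)x_u(t-1)\ge\tau$, where $x_u(s)\in\{0,1\}$ indicates whether $u$ fires at time $s$. *)

theory Defs
  imports Main "HOL.Real"
begin

definition concept_hierarchy ::
  "'c set \<Rightarrow> ('c \<Rightarrow> nat) \<Rightarrow> nat \<Rightarrow> nat \<Rightarrow> nat \<Rightarrow> 'c set \<Rightarrow> ('c \<Rightarrow> 'c set) \<Rightarrow> bool" where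
  "concept_hierarchy D level lmax n k C children \<longleftrightarrow>
     0 < lmax \<and> 0 < n \<and> 0 < k \<and>
     (\<forall>c\<in>D. level c \<le> lmax) \<and>
     card {c\<in>D. level c = 0} = n \<and>
     C \<subseteq> D \<and>
     card {c\<in>C. level c = lmax} = k \<and>
     (\<forall>c\<in>C. 1 \<le> level c \<longrightarrow>
        children c \<subseteq> {c'\<in>C. level c' = level c - 1} \<and> card (children c) = k) \<and>
     (\<forall>c\<in>C. \<forall>c'\<in>C. 1 \<le> level c \<longrightarrow> level c' = level c \<longrightarrow> c \<noteq> c' \<longrightarrow>
        children c \<inter> children c' = {})"

fun Bset :: "'c set \<Rightarrow> ('c \<Rightarrow> nat) \<Rightarrow> nat \<Rightarrow> 'c set \<Rightarrow> ('c \<Rightarrow> 'c set) \<Rightarrow> real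
             \<Rightarrow> 'c set \<Rightarrow> nat \<Rightarrow> 'c set" where
  "Bset D level k C children r B 0 = B \<inter> {c\<in>C. level c = 0}"
| "Bset D level k C children r B (Suc l) =
     {c\<in>C. level c = Suc l \<and> real (card (children c \<inter> Bset D level k C children r B l)) \<ge> r * real k}"

definition supp :: "'c set \<Rightarrow> ('c \<Rightarrow> nat) \<Rightarrow> nat \<Rightarrow> nat \<Rightarrow> 'c set \<Rightarrow> ('c \<Rightarrow> 'c set) \<Rightarrow> real
             \<Rightarrow> 'c set \<Rightarrow> 'c set" where
  "supp D level lmax k C children r B = (\<Union>l\<in>{0..lmax}. Bset D level k C children r B l)"

definition network_A2_wf ::
  "'c set \<Rightarrow> ('c \<Rightarrow> nat) \<Rightarrow> nat \<Rightarrow> 'c set \<Rightarrow> 'n set \<Rightarrow> ('n \<Rightarrow> nat) \<Rightarrow> ('c \<Rightarrow> 'n) \<Rightarrow> bool" where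
  "network_A2_wf D level lmax C N layer rep \<longleftrightarrow>
     finite N \<and> (\<forall>v\<in>N. layer v \<le> lmax) \<and>
     (\<forall>c \<in> {c\<in>D. level c = 0} \<union> {c\<in>C. 1 \<le> level c}. rep c \<in> N \<and> layer (rep c) = level c) \<and>
     inj_on rep ({c\<in>D. level c = 0} \<union> {c\<in>C. 1 \<le> level c})"

definition weight_A2 :: "('c \<Rightarrow> nat) \<Rightarrow> 'c set \<Rightarrow> ('c \<Rightarrow> 'c set) \<Rightarrow> ('c \<Rightarrow> 'n) \<Rightarrow> 'n \<Rightarrow> 'n \<Rightarrow> real" where
  "weight_A2 level C children rep u v =
     (if \<exists>c\<in>C. 1 \<le> level c \<and> v = rep c \<and> (\<exists>c'\<in>children c. u = rep c') then 1 else 0)"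

primrec fires_A2 :: "('c \<Rightarrow> nat) \<Rightarrow> nat \<Rightarrow> 'c set \<Rightarrow> ('c \<Rightarrow> 'c set) \<Rightarrow> 'n set \<Rightarrow> ('n \<Rightarrow> nat)
      \<Rightarrow> ('c \<Rightarrow> 'n) \<Rightarrow> real \<Rightarrow> 'c set \<Rightarrow> nat \<Rightarrow> 'n \<Rightarrow> bool" where
  "fires_A2 level k C children N layer rep r1 B 0 v = (layer v = 0 \<and> v \<in> rep ` B)"
| "fires_A2 level k C children N layer rep r1 B (Suc t) v =
     (1 \<le> layer v \<and>
      (\<Sum>u\<in>{u\<in>N. layer u = layer v - 1}.
          weight_A2 level C children rep u v *
          (if fires_A2 level k C children N layer rep r1 B t u then 1 else 0)) \<ge> r1 * real k)"

end

theory Submission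
  imports Defs
begin

text \<open>Because rep is injective and the weights of A_2 copy the child relation, the input that
  rep c receives at time l + 1 is exactly the number of children of c whose neurons fire at time l.
  By induction on the level, rep c therefore fires at time level c if and only if c \<in> B(level c),
  for every threshold ratio.\<close>

lemma concept_hierarchyD:
  assumes "concept_hierarchy D level lmax n k C children"
  shows "C \<subseteq> D" and "\<And>c. c \<in> D \<Longrightarrow> level c \<le> lmax"
    and "\<And>c. c \<in> C \<Longrightarrow> level c = Suc l \<Longrightarrow> children c \<subseteq> {c'\<in>C. level c' = l}"
proof -
  from assms have C_D: "C \<subseteq> D" and lmax: "\<forall>c\<in>D. level c \<le> lmax"
    and children: "\<forall>c\<in>C. 1 \<le> level c \<longrightarrow> children c \<subseteq> {c'\<in>C. level c' = level c - 1} \<and> card (children c) = k"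
    unfolding concept_hierarchy_def by blast+
  show "C \<subseteq> D" "\<And>c. c \<in> D \<Longrightarrow> level c \<le> lmax"
    using C_D lmax by auto
  show "children c \<subseteq> {c'\<in>C. level c' = l}" if "c \<in> C" "level c = Suc l" for c
    using bspec[OF children that(1)] that(2) by simp
qed

lemma network_A2_wfD:
  assumes "network_A2_wf D level lmax C N layer rep" and "C \<subseteq> D"
  shows "finite N" and "inj_on rep C"
    and "\<And>c. c \<in> C \<Longrightarrow> rep c \<in> N \<and> layer (rep c) = level c"
proof -
  have "C \<subseteq> {c\<in>D. level c = 0} \<union> {c\<in>C. 1 \<le> level c}"
    using \<open>C \<subseteq> D\<close> by auto
  then show "finite N" "inj_on rep C" "\<And>c. c \<in> C \<Longrightarrow> rep c \<in> N \<and> layer (rep c) = level c"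
    using assms(1) unfolding network_A2_wf_def by (auto intro: inj_on_subset)
qed

lemma weight_A2_rep:
  assumes "inj_on rep C" and "c \<in> C" and "1 \<le> level c"
  shows "weight_A2 level C children rep u (rep c) = of_bool (u \<in> rep ` children c)"
proof -
  have "(\<exists>c''\<in>C. 1 \<le> level c'' \<and> rep c = rep c'' \<and> (\<exists>c'\<in>children c''. u = rep c'))
        \<longleftrightarrow> u \<in> rep ` children c"
    using assms by (auto dest: inj_onD)
  then show ?thesis
    unfolding weight_A2_def by simp
qed

lemma sum_weight_A2_rep:
  assumes "inj_on rep C" and "c \<in> C" and "1 \<le> level c" and "children c \<subseteq> C"
    and "finite S" and "rep ` children c \<subseteq> S"
  shows "(\<Sum>u\<in>S. weight_A2 level C children rep u (rep c) * (if P u then 1 else 0))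
         = real (card {c'\<in>children c. P (rep c')})"
proof -
  have "(\<Sum>u\<in>S. weight_A2 level C children rep u (rep c) * (if P u then 1 else 0))
        = (\<Sum>u\<in>S. of_bool (u \<in> rep ` {c'\<in>children c. P (rep c')}) :: real)"
    using weight_A2_rep[of rep C c level children] assms(1-3) by (intro sum.cong) auto
  also have "\<dots> = real (card (S \<inter> rep ` {c'\<in>children c. P (rep c')}))"
    using \<open>finite S\<close> by (simp add: Int_def)
  also have "S \<inter> rep ` {c'\<in>children c. P (rep c')} = rep ` {c'\<in>children c. P (rep c')}"
    using \<open>rep ` children c \<subseteq> S\<close> by auto
  also have "card \<dots> = card {c'\<in>children c. P (rep c')}"
    using assms(1,4) by (intro card_image) (auto intro: inj_on_subset)
  finally show ?thesis .
qed

lemma fires_A2_rep_iff_Bset: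
  assumes hierarchy: "concept_hierarchy D level lmax n k C children"
    and network: "network_A2_wf D level lmax C N layer rep"
    and B: "B \<subseteq> {c\<in>C. level c = 0}"
    and "c \<in> C"
  shows "fires_A2 level k C children N layer rep r B (level c) (rep c)
         \<longleftrightarrow> c \<in> Bset D level k C children r B (level c)"
proof -
  note rep = network_A2_wfD[OF network concept_hierarchyD(1)[OF hierarchy]]
  let ?F = "fires_A2 level k C children N layer rep r B"
  let ?B = "Bset D level k C children r B"
  show ?thesis
    using \<open>c \<in> C\<close>
  proof (induction "level c" arbitrary: c)
    case 0
    then have "layer (rep c) = 0"
      using rep(3) by simp
    moreover have "rep c \<in> rep ` B \<longleftrightarrow> c \<in> B"
      using B \<open>c \<in> C\<close> by (intro inj_on_image_mem_iff[OF rep(2)]) auto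
    ultimately show ?case
      using \<open>c \<in> C\<close> by (simp flip: \<open>0 = level c\<close>)
  next
    case (Suc l)
    then have level: "level c = Suc l"
      by simp
    have children: "children c \<subseteq> {c'\<in>C. level c' = l}"
      using concept_hierarchyD(3)[OF hierarchy \<open>c \<in> C\<close> level] .
    have layer: "layer (rep c) = Suc l"
      using rep(3)[OF \<open>c \<in> C\<close>] level by simp
    have "(\<Sum>u\<in>{u\<in>N. layer u = layer (rep c) - 1}.
             weight_A2 level C children rep u (rep c) * (if ?F l u then 1 else 0))
          = real (card {c'\<in>children c. ?F l (rep c')})"
    proof (rule sum_weight_A2_rep)
      show "rep ` children c \<subseteq> {u\<in>N. layer u = layer (rep c) - 1}"
        using children rep(3) layer by auto
    qed (use rep(1,2) children \<open>c \<in> C\<close> level in auto)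
    also have "{c'\<in>children c. ?F l (rep c')} = children c \<inter> ?B l"
      using children Suc.hyps(1) by blast
    finally have "?F (Suc l) (rep c) \<longleftrightarrow> c \<in> ?B (Suc l)"
      using layer level \<open>c \<in> C\<close> by simp
    then show ?case
      by (simp only: level)
  qed
qed

theorem theorem6p3:
  fixes D C :: "'c set" and level :: "'c \<Rightarrow> nat" and children :: "'c \<Rightarrow> 'c set"
    and lmax n k :: nat and r1 :: real
    and N :: "'n set" and layer :: "'n \<Rightarrow> nat" and rep :: "'c \<Rightarrow> 'n"
  assumes "concept_hierarchy D level lmax n k C children"
    and "0 \<le> r1" and "r1 \<le> 1"
    and "network_A2_wf D level lmax C N layer rep"
  shows "\<forall>B. B \<subseteq> {c\<in>C. level c = 0} \<longrightarrow>
           (\<forall>c\<in>C. c \<notin> supp D level lmax k C children r1 B \<longrightarrow>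
              \<not> fires_A2 level k C children N layer rep r1 B (level c) (rep c))"
proof (intro allI impI ballI)
  fix B c
  assume B: "B \<subseteq> {c\<in>C. level c = 0}" and "c \<in> C"
    and not_supp: "c \<notin> supp D level lmax k C children r1 B"
  have "level c \<le> lmax"
    using concept_hierarchyD(1,2)[OF assms(1)] \<open>c \<in> C\<close> by blast
  then have "c \<notin> Bset D level k C children r1 B (level c)"
    using not_supp unfolding supp_def by auto
  then show "\<not> fires_A2 level k C children N layer rep r1 B (level c) (rep c)"
    using fires_A2_rep_iff_Bset[OF assms(1,4) B \<open>c \<in> C\<close>] by blast
qed

end
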